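(* Let $\mathcal{R}$ be a PTRS and let $\mathfrak{P}=(V,E,L_{\mathcal{A}},L_{\mathcal{C}})$ be a well-formed solved proof tree whose root $v_1$ satisfies $L_{\mathcal{A}}(v_1)=\langle\mathcal{A}(\mathcal{R}),\mathcal{A}(\mathcal{R})\rangle$. Then $\iota_{\mathcal{R}}\sqsubseteq\max\{L_{\mathcal{C}}(v)\mid v\in V\}$.
   Context: PTRS: a finite set $\mathcal{R}$ of rules $\ell\to\{p_1:r_1,\dots,p_k:r_k\}$ over a finite signature $\Sigma$, $\ell$ not a variable, $0<p_j\le1$, $\sum p_j=1$, $\mathcal{V}(r_j)\subseteq\mathcal{V}(\ell)$. Defined symbols $\mathcal{D}$ = roots of left-hand sides; basic terms are $f(t_1,\dots,t_k)$ with $f\in\mathcal{D}$ and $t_i$ containing no defined symbols; $|t|$ is term size. Innermost rewriting: $s\to_{\mathcal{R}}\{p_j:s[r_j\sigma]_\pi\}$ if $s|_\pi=\ell\sigma$ and all proper subterms of $\ell\sigma$ are $\mathcal{R}$-normal forms. A rewrite sequence tree (RST) is a possibly infinite, finitely branching tree with nodes labeled $(p_v:t_v)$, root probability 1, and $t_v\to_{\mathcal{R}}\{\tfrac{p_w}{p_v}:t_w\}_{w\text{ child}}$ for inner nodes; $\operatorname{edl}(\mathfrak{T})=\sum_{v\text{ inner}}p_v$; $\operatorname{edh}_{\mathcal{R}}(t)=\sup$ of $\operatorname{edl}$ over RSTs with root $t$; $\operatorname{eirc}_{\mathcal{R}}(n)=\sup\{\operatorname{edh}_{\mathcal{R}}(t)\mid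 t\text{ basic},|t|\le n\}$; $\iota_{\mathcal{R}}=\iota(\operatorname{eirc}_{\mathcal{R}})$. Complexities $\mathfrak{C}=\{\mathrm{Pol}_0,\mathrm{Pol}_1,\dots,\mathrm{Exp},\mathrm{2\text{-}Exp},\mathrm{Fin},\omega\}$ ordered $\mathrm{Pol}_0\sqsubset\mathrm{Pol}_1\sqsubset\dots\sqsubset\mathrm{Exp}\sqsubset\mathrm{2\text{-}Exp}\sqsubset\mathrm{Fin}\sqsubset\omega$, $\oplus$ = maximum; $\iota(f)=\mathrm{Pol}_a$ for least $a$ with $f\in O(n^a)$, else $\mathrm{Exp}$ if $f\in O(2^{\mathrm{pol}(n)})$, else $\mathrm{2\text{-}Exp}$ if $f\in O(2^{2^{\mathrm{pol}(n)}})$, else $\mathrm{Fin}$ if $f$ never equals $\omega$, else $\omega$. Annotated dependency pairs: fresh symbols $f^\sharp$ for $f\in\mathcal{D}$; $\flat$ removes annotations, $\sharp_{\mathcal{D}}(t)$ annotates all defined symbols, $\flat^\uparrow_\pi$ removes annotations strictly above $\pi$, $t^\sharp$ annotates the root. An ADP is $\ell\to\{p_1:r_1,\dots,p_k:r_k\}^m$ with $r_j$ possibly annotated and flag $m\in\{\mathsf{true},\mathsf{false}\}$. $\mathcal{A}(\mathcal{R})=\{\ell\to\{p_1:\sharp_{\mathcal{D}}(r_1),\dots,p_k:\sharp_{\mathcal{D}}(r_k)\}^{\mathsf{true}}\mid \ell\to\{p_1:r_1,\dots\}\in\mathcal{R}\}$. Rewriting with a set $\mathcal{P}$ of ADPs: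 at a position $\pi$ with defined or annotated symbol, ADP $\ell\to\{p_j:r_j\}^m\in\mathcal{P}$, $\sigma$ with $\flat(s|_\pi)=\ell\sigma$ having only normal-form proper subterms: $t_j=s[r_j\sigma]_\pi$ (at: $m=\mathsf{true}$, $\pi$ annotated), $s[\flat(r_j)\sigma]_\pi$ (nt), $\flat^\uparrow_\pi(s[r_j\sigma]_\pi)$ (af: $m=\mathsf{false}$, annotated), $\flat^\uparrow_\pi(s[\flat(r_j)\sigma]_\pi)$ (nf). $\mathcal{P}$-chain trees are defined like RSTs with this relation. For $\mathcal{S}\subseteq\mathcal{P}$: $\operatorname{edl}_{\langle\mathcal{P},\mathcal{S}\rangle}(\mathfrak{T})$ sums $p_v$ over inner nodes rewritten by (at)/(af)-steps with ADPs from $\mathcal{S}$; $\operatorname{edh}_{\langle\mathcal{P},\mathcal{S}\rangle}(t)$ = supremum over chain trees with root $t^\sharp$ for basic $t$; $\iota_{\langle\mathcal{P},\mathcal{S}\rangle}=\iota(n\mapsto\sup\{\operatorname{edh}_{\langle\mathcal{P},\mathcal{S}\rangle}(t)\mid t\text{ basic},|t|\le n\})$. ADP problems $\langle\mathcal{P},\mathcal{S}\rangle$ ($\mathcal{S}\subseteq\mathcal{P}$, solved iff $\mathcal{S}=\emptyset$); processors map an ADP problem to a complexity and a finite set of ADP problems. A proof tree $(V,E,L_{\mathcal{A}},L_{\mathcal{C}})$ is a finite tree labeling nodes with ADP problems and complexities such that at each inner node $v$ with children $w_i$ some processor maps $L_{\mathcal{A}}(v)$ to $(L_{\mathcal{C}}(v),\{L_{\mathcal{A}}(w_i)\})$,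 and leaves carry $\mathrm{Pol}_0$ if solved, $\omega$ otherwise; it is solved if all leaf problems are solved. It is well formed if for every node $v$ with $L_{\mathcal{A}}(v)=\langle\mathcal{P},\mathcal{S}\rangle$ and root path $v_1,\dots,v_k=v$: $\iota_{\langle\mathcal{P},\mathcal{S}\rangle}\sqsubseteq L_{\mathcal{C}}(v_1)\oplus\dots\oplus L_{\mathcal{C}}(v_{k-1})\oplus\max\{L'_{\mathcal{C}}(w)\mid w$ reachable from $v$ including $v\}$ and $\iota_{\langle\mathcal{P},\mathcal{P}\setminus\mathcal{S}\rangle}\sqsubseteq L_{\mathcal{C}}(v_1)\oplus\dots\oplus L_{\mathcal{C}}(v_{k-1})$, with $L'_{\mathcal{C}}=L_{\mathcal{C}}$ on inner nodes and $L'_{\mathcal{C}}(w)=\iota_{L_{\mathcal{A}}(w)}$ on leaves (empty $\oplus$ is $\mathrm{Pol}_0$). *)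

theory Defs
  imports Complex_Main "HOL-Library.Extended_Nonnegative_Real" "HOL-Library.Product_Lexorder"
begin

datatype (funs_trm: 'f, vars_trm: 'v) trm = Var 'v | Fun 'f "('f,'v) trm list"

primrec tsize :: "('f,'v) trm \<Rightarrow> nat" where
  "tsize (Var x) = 1"
| "tsize (Fun f ts) = Suc (sum_list (map tsize ts))"

fun wf_trm :: "('f \<times> nat) set \<Rightarrow> ('f,'v) trm \<Rightarrow> bool" where
  "wf_trm \<Sigma> (Var x) = True"
| "wf_trm \<Sigma> (Fun f ts) = ((f, length ts) \<in> \<Sigma> \<and> (\<forall>t\<in>set ts. wf_trm \<Sigma> t))"

primrec subst :: "('v \<Rightarrow> ('f,'w) trm) \<Rightarrow> ('f,'v) trm \<Rightarrow> ('f,'w) trm" where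
  "subst \<sigma> (Var x) = \<sigma> x"
| "subst \<sigma> (Fun f ts) = Fun f (map (subst \<sigma>) ts)"

inductive is_pos :: "('f,'v) trm \<Rightarrow> nat list \<Rightarrow> bool" where
  "is_pos t []"
| "i < length ts \<Longrightarrow> is_pos (ts ! i) p \<Longrightarrow> is_pos (Fun f ts) (i # p)"

fun subt_at :: "('f,'v) trm \<Rightarrow> nat list \<Rightarrow> ('f,'v) trm" where
  "subt_at t [] = t"
| "subt_at (Var x) (i # p) = Var x"
| "subt_at (Fun f ts) (i # p) = subt_at (ts ! i) p"

fun replace_at :: "('f,'v) trm \<Rightarrow> nat list \<Rightarrow> ('f,'v) trm \<Rightarrow> ('f,'v) trm" where
  "replace_at t [] s = s"
| "replace_at (Var x) (i # p) s = Var x"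
| "replace_at (Fun f ts) (i # p) s = Fun f (ts[i := replace_at (ts ! i) p s])"

type_synonym ('f,'v) prule = "('f,'v) trm \<times> (real \<times> ('f,'v) trm) list"

definition PTRS :: "('f \<times> nat) set \<Rightarrow> ('f,'v) prule set \<Rightarrow> bool" where
  "PTRS \<Sigma> R \<longleftrightarrow> finite \<Sigma> \<and> finite R \<and>
     (\<forall>(l, mu) \<in> R. (\<forall>x. l \<noteq> Var x) \<and> wf_trm \<Sigma> l \<and>
        (\<forall>(p, r) \<in> set mu. 0 < p \<and> p \<le> 1 \<and> wf_trm \<Sigma> r \<and> vars_trm r \<subseteq> vars_trm l) \<and>
        sum_list (map fst mu) = 1)"

definition defined_syms :: "('f,'v) prule set \<Rightarrow> 'f set" where
  "defined_syms R = {f. \<exists>l mu ts. (l, mu) \<in> R \<and> l = Fun f ts}"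

definition basic :: "('f \<times> nat) set \<Rightarrow> ('f,'v) prule set \<Rightarrow> ('f,'v) trm \<Rightarrow> bool" where
  "basic \<Sigma> R t \<longleftrightarrow> wf_trm \<Sigma> t \<and>
     (\<exists>f ts. t = Fun f ts \<and> f \<in> defined_syms R \<and> (\<forall>s\<in>set ts. funs_trm s \<inter> defined_syms R = {}))"

definition NF :: "('f,'v) trm set \<Rightarrow> ('f,'v) trm \<Rightarrow> bool" where
  "NF L t \<longleftrightarrow> (\<forall>p. is_pos t p \<longrightarrow> \<not> (\<exists>l\<in>L. \<exists>\<sigma>. subt_at t p = subst \<sigma> l))"

definition args_NF :: "('f,'v) trm set \<Rightarrow> ('f,'v) trm \<Rightarrow> bool" where
  "args_NF L u \<longleftrightarrow> (\<forall>q. is_pos u q \<and> q \<noteq> [] \<longrightarrow> NF L (subt_at u q))"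

text \<open>Innermost rewrite step \<open>s \<rightarrow>\<^sub>R {p1:t1,...,pk:tk}\<close> (multi-distribution as a list).\<close>
definition istep :: "('f,'v) prule set \<Rightarrow> ('f,'v) trm \<Rightarrow> (real \<times> ('f,'v) trm) list \<Rightarrow> bool" where
  "istep R s nu \<longleftrightarrow> (\<exists>\<pi> l mu \<sigma>. (l, mu) \<in> R \<and> is_pos s \<pi> \<and> subt_at s \<pi> = subst \<sigma> l \<and>
      args_NF (fst ` R) (subst \<sigma> l) \<and>
      nu = map (\<lambda>(p, r). (p, replace_at s \<pi> (subst \<sigma> r))) mu)"

section \<open>Trees (possibly infinite, finitely branching), nodes are lists of child indices\<close>

definition is_tree :: "nat list set \<Rightarrow> bool" where
  "is_tree N \<longleftrightarrow> [] \<in> N \<and> (\<forall>v i. v @ [i] \<in> N \<longrightarrow> v \<in> N) \<and>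
     (\<forall>v\<in>N. \<exists>k. {i. v @ [i] \<in> N} = {..<k})"

definition nchildren :: "nat list set \<Rightarrow> nat list \<Rightarrow> nat" where
  "nchildren N v = card {i. v @ [i] \<in> N}"

definition inner :: "nat list set \<Rightarrow> nat list \<Rightarrow> bool" where
  "inner N v \<longleftrightarrow> v \<in> N \<and> v @ [0] \<in> N"

definition children_dist :: "nat list set \<Rightarrow> (nat list \<Rightarrow> real) \<Rightarrow> (nat list \<Rightarrow> 'a) \<Rightarrow> nat list \<Rightarrow> (real \<times> 'a) list" where
  "children_dist N pr tm v = map (\<lambda>i. (pr (v @ [i]) / pr v, tm (v @ [i]))) [0..<nchildren N v]"

definition RST :: "('f,'v) prule set \<Rightarrow> nat list set \<Rightarrow> (nat list \<Rightarrow> real) \<Rightarrow> (nat list \<Rightarrow> ('f,'v) trm) \<Rightarrow> ('f,'v) trm \<Rightarrow> bool" where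
  "RST R N pr tm t0 \<longleftrightarrow> is_tree N \<and> pr [] = 1 \<and> tm [] = t0 \<and>
     (\<forall>v. inner N v \<longrightarrow> istep R (tm v) (children_dist N pr tm v))"

definition psum :: "(nat list \<Rightarrow> real) \<Rightarrow> nat list set \<Rightarrow> ennreal" where
  "psum pr A = (SUP F \<in> {F. finite F \<and> F \<subseteq> A}. \<Sum>v\<in>F. ennreal (pr v))"

definition edl :: "nat list set \<Rightarrow> (nat list \<Rightarrow> real) \<Rightarrow> ennreal" where
  "edl N pr = psum pr {v. inner N v}"

definition edh :: "('f,'v) prule set \<Rightarrow> ('f,'v) trm \<Rightarrow> ennreal" where
  "edh R t = (SUP T \<in> {(N, pr, tm). RST R N pr tm t}. (case T of (N, pr, tm) \<Rightarrow> edl N pr))"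

definition eirc :: "('f \<times> nat) set \<Rightarrow> ('f,'v) prule set \<Rightarrow> nat \<Rightarrow> ennreal" where
  "eirc \<Sigma> R n = (SUP t \<in> {t. basic \<Sigma> R t \<and> tsize t \<le> n}. edh R t)"

datatype complexity = Pol nat | Exp | TwoExp | Fin | Omega

fun crank :: "complexity \<Rightarrow> nat \<times> nat" where
  "crank (Pol a) = (0, a)"
| "crank Exp = (1, 0)"
| "crank TwoExp = (2, 0)"
| "crank Fin = (3, 0)"
| "crank Omega = (4, 0)"

lemma crank_inj: "crank x = crank y \<Longrightarrow> x = y"
  by (cases x; cases y; simp)

instantiation complexity :: linorder
begin
definition less_eq_complexity :: "complexity \<Rightarrow> complexity \<Rightarrow> bool" where
  "less_eq_complexity x y \<longleftrightarrow> crank x \<le> crank y"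
definition less_complexity :: "complexity \<Rightarrow> complexity \<Rightarrow> bool" where
  "less_complexity x y \<longleftrightarrow> crank x < crank y"
instance
  by standard (auto simp: less_eq_complexity_def less_complexity_def intro: crank_inj)
end

definition bigO :: "(nat \<Rightarrow> ennreal) \<Rightarrow> (nat \<Rightarrow> real) \<Rightarrow> bool" where
  "bigO f g \<longleftrightarrow> (\<exists>c::real. \<exists>N. \<forall>n\<ge>N. f n \<le> ennreal (c * g n))"

definition iota :: "(nat \<Rightarrow> ennreal) \<Rightarrow> complexity" where
  "iota f =
    (if \<exists>a. bigO f (\<lambda>n. real n ^ a) then Pol (LEAST a. bigO f (\<lambda>n. real n ^ a))
     else if \<exists>c d. bigO f (\<lambda>n. 2 powr (c * real n ^ d)) then Exp
     else if \<exists>c d. bigO f (\<lambda>n. 2 powr (2 powr (c * real n ^ d))) then TwoExp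
     else if \<forall>n. f n \<noteq> top then Fin
     else Omega)"

text \<open>Maximum of a finite set of complexities; the empty maximum is \<open>Pol 0\<close>.\<close>
definition cmax :: "complexity set \<Rightarrow> complexity" where
  "cmax A = Max (insert (Pol 0) A)"

definition iota_R :: "('f \<times> nat) set \<Rightarrow> ('f,'v) prule set \<Rightarrow> complexity" where
  "iota_R \<Sigma> R = iota (eirc \<Sigma> R)"

text \<open>Annotated symbols: \<open>(f, True)\<close> is \<open>f\<^sup>\<sharp>\<close>, \<open>(f, False)\<close> is \<open>f\<close>.\<close>
type_synonym ('f,'v) atrm = "('f \<times> bool, 'v) trm"
type_synonym ('f,'v) adp = "('f,'v) trm \<times> (real \<times> ('f,'v) atrm) list \<times> bool"

definition embed :: "('f,'v) trm \<Rightarrow> ('f,'v) atrm" where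
  "embed t = map_trm (\<lambda>f. (f, False)) id t"

definition flat :: "('f,'v) atrm \<Rightarrow> ('f,'v) trm" where
  "flat t = map_trm fst id t"

definition sharp_D :: "'f set \<Rightarrow> ('f,'v) trm \<Rightarrow> ('f,'v) atrm" where
  "sharp_D D t = map_trm (\<lambda>f. (f, f \<in> D)) id t"

fun sharp_root :: "('f,'v) trm \<Rightarrow> ('f,'v) atrm" where
  "sharp_root (Var x) = Var x"
| "sharp_root (Fun f ts) = Fun (f, True) (map embed ts)"

text \<open>\<open>\<flat>\<^sup>\<up>\<^sub>\<pi>\<close>: remove the annotations strictly above position \<open>\<pi>\<close>.\<close>
fun flat_above :: "('f,'v) atrm \<Rightarrow> nat list \<Rightarrow> ('f,'v) atrm" where
  "flat_above t [] = t"
| "flat_above (Var x) (i # p) = Var x"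
| "flat_above (Fun (f, b) ts) (i # p) = Fun (f, False) (ts[i := flat_above (ts ! i) p])"

definition annotated_at :: "('f,'v) atrm \<Rightarrow> nat list \<Rightarrow> bool" where
  "annotated_at s \<pi> \<longleftrightarrow> (\<exists>f ts. subt_at s \<pi> = Fun (f, True) ts)"

definition A_of :: "('f,'v) prule set \<Rightarrow> ('f,'v) adp set" where
  "A_of R = {(l, map (\<lambda>(p, r). (p, sharp_D (defined_syms R) r)) mu, True) | l mu. (l, mu) \<in> R}"

definition adp_lhss :: "('f,'v) adp set \<Rightarrow> ('f,'v) trm set" where
  "adp_lhss P = (\<lambda>(l, mu, m). l) ` P"

text \<open>Cases (at)/(af) occur iff the position is annotated, (nt)/(nf) otherwise;
  the flag selects (at)/(nt) (true) versus (af)/(nf) (false).\<close>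
definition adp_step :: "('f,'v) prule set \<Rightarrow> ('f,'v) adp set \<Rightarrow> ('f,'v) atrm \<Rightarrow>
    nat list \<times> ('f,'v) adp \<times> ('v \<Rightarrow> ('f,'v) trm) \<Rightarrow> (real \<times> ('f,'v) atrm) list \<Rightarrow> bool" where
  "adp_step R P s w nu \<longleftrightarrow> (case w of (\<pi>, (l, mu, m), \<sigma>) \<Rightarrow>
     (l, mu, m) \<in> P \<and> is_pos s \<pi> \<and>
     (\<exists>f b ts. subt_at s \<pi> = Fun (f, b) ts \<and> (b \<or> f \<in> defined_syms R)) \<and>
     flat (subt_at s \<pi>) = subst \<sigma> l \<and> args_NF (adp_lhss P) (subst \<sigma> l) \<and>
     nu = map (\<lambda>(p, r).
        (p, (let r' = (if annotated_at s \<pi> then r else embed (flat r));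
                 t = replace_at s \<pi> (subst (embed \<circ> \<sigma>) r')
             in if m then t else flat_above t \<pi>))) mu)"

definition chain_tree :: "('f,'v) prule set \<Rightarrow> ('f,'v) adp set \<Rightarrow> nat list set \<Rightarrow> (nat list \<Rightarrow> real) \<Rightarrow>
    (nat list \<Rightarrow> ('f,'v) atrm) \<Rightarrow> (nat list \<Rightarrow> nat list \<times> ('f,'v) adp \<times> ('v \<Rightarrow> ('f,'v) trm)) \<Rightarrow>
    ('f,'v) atrm \<Rightarrow> bool" where
  "chain_tree R P N pr tm info t0 \<longleftrightarrow> is_tree N \<and> pr [] = 1 \<and> tm [] = t0 \<and>
     (\<forall>v. inner N v \<longrightarrow> adp_step R P (tm v) (info v) (children_dist N pr tm v))"

text \<open>Nodes rewritten by an (at)- or (af)-step using an ADP from \<open>S\<close>.\<close>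
definition edl_PS :: "('f,'v) adp set \<Rightarrow> nat list set \<Rightarrow> (nat list \<Rightarrow> real) \<Rightarrow>
    (nat list \<Rightarrow> ('f,'v) atrm) \<Rightarrow> (nat list \<Rightarrow> nat list \<times> ('f,'v) adp \<times> ('v \<Rightarrow> ('f,'v) trm)) \<Rightarrow> ennreal" where
  "edl_PS S N pr tm info =
     psum pr {v. inner N v \<and> fst (snd (info v)) \<in> S \<and> annotated_at (tm v) (fst (info v))}"

definition edh_PS :: "('f,'v) prule set \<Rightarrow> ('f,'v) adp set \<Rightarrow> ('f,'v) adp set \<Rightarrow> ('f,'v) trm \<Rightarrow> ennreal" where
  "edh_PS R P S t = (SUP T \<in> {(N, pr, tm, info). chain_tree R P N pr tm info (sharp_root t)}.
      (case T of (N, pr, tm, info) \<Rightarrow> edl_PS S N pr tm info))"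

definition iota_PS :: "('f \<times> nat) set \<Rightarrow> ('f,'v) prule set \<Rightarrow> ('f,'v) adp set \<times> ('f,'v) adp set \<Rightarrow> complexity" where
  "iota_PS \<Sigma> R PS = (case PS of (P, S) \<Rightarrow>
     iota (\<lambda>n. SUP t \<in> {t. basic \<Sigma> R t \<and> tsize t \<le> n}. edh_PS R P S t))"

type_synonym ('f,'v) adp_problem = "('f,'v) adp set \<times> ('f,'v) adp set"

definition ptree_inner :: "nat list set \<Rightarrow> nat list \<Rightarrow> bool" where
  "ptree_inner V v \<longleftrightarrow> v \<in> V \<and> (\<exists>i. v @ [i] \<in> V)"

definition ptree_children :: "nat list set \<Rightarrow> nat list \<Rightarrow> nat list set" where
  "ptree_children V v = {w \<in> V. \<exists>i. w = v @ [i]}"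

text \<open>A (finite) proof tree; a processor is any map from ADP problems to a complexity and a
  finite set of ADP problems.\<close>
definition proof_tree :: "nat list set \<Rightarrow> (nat list \<Rightarrow> ('f,'v) adp_problem) \<Rightarrow> (nat list \<Rightarrow> complexity) \<Rightarrow> bool" where
  "proof_tree V LA LC \<longleftrightarrow> finite V \<and> [] \<in> V \<and> (\<forall>v i. v @ [i] \<in> V \<longrightarrow> v \<in> V) \<and>
     (\<forall>v\<in>V. snd (LA v) \<subseteq> fst (LA v)) \<and>
     (\<forall>v. ptree_inner V v \<longrightarrow>
        (\<exists>proc :: ('f,'v) adp_problem \<Rightarrow> complexity \<times> ('f,'v) adp_problem set.
           (\<forall>X. finite (snd (proc X))) \<and>
           proc (LA v) = (LC v, LA ` ptree_children V v))) \<and>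
     (\<forall>v\<in>V. \<not> ptree_inner V v \<longrightarrow> LC v = (if snd (LA v) = {} then Pol 0 else Omega))"

definition ptree_solved :: "nat list set \<Rightarrow> (nat list \<Rightarrow> ('f,'v) adp_problem) \<Rightarrow> bool" where
  "ptree_solved V LA \<longleftrightarrow> (\<forall>v\<in>V. \<not> ptree_inner V v \<longrightarrow> snd (LA v) = {})"

definition well_formed :: "('f \<times> nat) set \<Rightarrow> ('f,'v) prule set \<Rightarrow> nat list set \<Rightarrow>
    (nat list \<Rightarrow> ('f,'v) adp_problem) \<Rightarrow> (nat list \<Rightarrow> complexity) \<Rightarrow> bool" where
  "well_formed \<Sigma> R V LA LC \<longleftrightarrow> (\<forall>v\<in>V.
     (let P = fst (LA v); S = snd (LA v);
          anc = {u. \<exists>x. x \<noteq> [] \<and> v = u @ x};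
          desc = {w \<in> V. \<exists>x. w = v @ x};
          L' = (\<lambda>w. if ptree_inner V w then LC w else iota_PS \<Sigma> R (LA w))
      in iota_PS \<Sigma> R (P, S) \<le> max (cmax (LC ` anc)) (cmax (L' ` desc)) \<and>
         iota_PS \<Sigma> R (P, P - S) \<le> cmax (LC ` anc)))"

end

(*
  An innermost rewrite sequence tree of a basic term t is simulated by an A(R)-chain tree of the
  same shape and with the same probabilities, rooted at the annotated term t#: a step with the
  rule l -> {p_j : r_j} becomes a step with the ADP l -> {p_j : sharp_D(r_j)} at the same position
  and with the same substitution.  Along the simulation every subterm that has a defined root and
  is not in normal form stays annotated; hence each innermost redex is annotated, every step is an
  (at)-step, and the chain tree has the same expected derivation length as the rewrite sequence
  tree.  This gives iota_R <= iota of <A(R), A(R)>, which well-formedness at the root bounds by the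
  labels of the proof tree, solved leaves contributing Pol 0.
*)
theory Submission
  imports Defs
begin

lemma flat_simps [simp]: "flat (Var x) = Var x" "flat (Fun fb ts) = Fun (fst fb) (map flat ts)"
  by (simp_all add: flat_def)

lemma embed_simps [simp]: "embed (Var x) = Var x" "embed (Fun f ts) = Fun (f, False) (map embed ts)"
  by (simp_all add: embed_def)

lemma sharp_D_simps [simp]:
  "sharp_D D (Var x) = Var x" "sharp_D D (Fun f ts) = Fun (f, f \<in> D) (map (sharp_D D) ts)"
  by (simp_all add: sharp_D_def)

lemma flat_embed [simp]: "flat (embed t) = t"
  by (induction t) (auto intro: map_idI)

lemma flat_sharp_D [simp]: "flat (sharp_D D t) = t"
  by (induction t) (auto intro: map_idI)

lemma flat_sharp_root [simp]: "flat (sharp_root t) = t"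
  by (cases t) (auto intro: map_idI)

lemma flat_subst: "flat (subst \<tau> t) = subst (flat \<circ> \<tau>) (flat t)"
  by (induction t) auto

lemma is_pos_Nil [simp]: "is_pos t []"
  by (rule is_pos.intros)

lemma is_pos_Var [simp]: "is_pos (Var x) p \<longleftrightarrow> p = []"
  by (auto elim: is_pos.cases)

lemma is_pos_Fun_Cons [simp]: "is_pos (Fun f ts) (i # p) \<longleftrightarrow> i < length ts \<and> is_pos (ts ! i) p"
  by (auto elim: is_pos.cases intro: is_pos.intros)

lemma is_pos_flat [simp]: "is_pos (flat c) p \<longleftrightarrow> is_pos c p"
proof (induction p arbitrary: c)
  case (Cons i p)
  then show ?case by (cases c) auto
qed simp

lemma subt_at_flat: "is_pos c p \<Longrightarrow> subt_at (flat c) p = flat (subt_at c p)"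
proof (induction p arbitrary: c)
  case (Cons i p)
  then show ?case by (cases c) simp_all
qed simp

lemma replace_at_flat: "is_pos c p \<Longrightarrow> flat (replace_at c p u) = replace_at (flat c) p (flat u)"
proof (induction p arbitrary: c)
  case (Cons i p)
  then show ?case by (cases c) (simp_all add: map_update)
qed simp

lemma is_pos_append: "is_pos t p \<Longrightarrow> is_pos (subt_at t p) q \<Longrightarrow> is_pos t (p @ q)"
proof (induction p arbitrary: t)
  case (Cons i p)
  from Cons.prems(1) obtain f ts where "t = Fun f ts" by (cases t) auto
  with Cons show ?case by auto
qed simp

lemma subt_at_append: "is_pos t p \<Longrightarrow> subt_at t (p @ q) = subt_at (subt_at t p) q"
proof (induction p arbitrary: t)
  case (Cons i p)
  from Cons.prems(1) obtain f ts where "t = Fun f ts" by (cases t) auto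
  with Cons show ?case by auto
qed simp

lemma is_pos_subst: "is_pos l p \<Longrightarrow> is_pos (subst \<sigma> l) p"
proof (induction p arbitrary: l)
  case (Cons i p)
  from Cons.prems(1) obtain f ts where "l = Fun f ts" by (cases l) auto
  with Cons show ?case by auto
qed simp

lemma subt_at_subst: "is_pos l p \<Longrightarrow> subt_at (subst \<sigma> l) p = subst \<sigma> (subt_at l p)"
proof (induction p arbitrary: l)
  case (Cons i p)
  from Cons.prems(1) obtain f ts where "l = Fun f ts" by (cases l) auto
  with Cons show ?case by auto
qed simp

lemma vars_trm_is_pos: "x \<in> vars_trm l \<Longrightarrow> \<exists>p. is_pos l p \<and> subt_at l p = Var x"
proof (induction l)
  case (Var y)
  then show ?case by simp
next
  case (Fun f ts)
  then obtain i where i: "i < length ts" "x \<in> vars_trm (ts ! i)"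
    by (auto simp: in_set_conv_nth)
  then obtain p where "is_pos (ts ! i) p" "subt_at (ts ! i) p = Var x"
    using Fun.IH by (meson nth_mem)
  with i show ?case by (intro exI[of _ "i # p"]) simp
qed

lemma NF_subt_at: "NF L t \<Longrightarrow> is_pos t p \<Longrightarrow> NF L (subt_at t p)"
  unfolding NF_def by (metis is_pos_append subt_at_append)

lemma NF_Fun_arg: "NF L (Fun f ts) \<Longrightarrow> t \<in> set ts \<Longrightarrow> NF L t"
  by (metis NF_subt_at in_set_conv_nth is_pos_Fun_Cons is_pos_Nil subt_at.simps(1,3))

lemma not_NF_instance: "l \<in> L \<Longrightarrow> \<not> NF L (subst \<sigma> l)"
  unfolding NF_def by (metis is_pos_Nil subt_at.simps(1))

lemma NF_subst_var:
  assumes "args_NF L (subst \<sigma> l)" and "\<forall>y. l \<noteq> Var y" and "x \<in> vars_trm l"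
  shows "NF L (\<sigma> x)"
proof -
  obtain p where p: "is_pos l p" "subt_at l p = Var x"
    using vars_trm_is_pos[OF assms(3)] by blast
  with assms(2) have "p \<noteq> []" by auto
  with p assms(1) show ?thesis
    unfolding args_NF_def by (metis is_pos_subst subt_at_subst subst.simps(1))
qed

section \<open>Annotated reducible subterms\<close>

fun reducible_annotated :: "'f set \<Rightarrow> ('f,'v) trm set \<Rightarrow> ('f,'v) atrm \<Rightarrow> bool" where
  "reducible_annotated D L (Var x) \<longleftrightarrow> True"
| "reducible_annotated D L (Fun (f, b) ts) \<longleftrightarrow>
     (f \<in> D \<and> \<not> NF L (flat (Fun (f, b) ts)) \<longrightarrow> b) \<and> (\<forall>t\<in>set ts. reducible_annotated D L t)"

lemma reducible_annotated_subt_at: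
  "reducible_annotated D L c \<Longrightarrow> is_pos c p \<Longrightarrow> reducible_annotated D L (subt_at c p)"
proof (induction p arbitrary: c)
  case (Cons i p)
  from Cons.prems(2) obtain f b ts where "c = Fun (f, b) ts" by (cases c) auto
  with Cons show ?case by auto
qed simp

text \<open>The annotations above \<open>\<pi>\<close> are left untouched, and they were forced already, because every
  term above a reducible subterm is reducible.\<close>
lemma reducible_annotated_replace_at:
  assumes "reducible_annotated D L c" and "is_pos c \<pi>" and "\<not> NF L (flat (subt_at c \<pi>))"
    and "reducible_annotated D L u"
  shows "reducible_annotated D L (replace_at c \<pi> u)"
  using assms
proof (induction \<pi> arbitrary: c)
  case (Cons i p)
  from Cons.prems(2) obtain f b ts where c: "c = Fun (f, b) ts" by (cases c) auto
  with Cons.prems(2) have i: "i < length ts" "is_pos (ts ! i) p" by simp_all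
  have "\<not> NF L (flat c)"
    using Cons.prems(2,3) NF_subt_at subt_at_flat by (metis is_pos_flat)
  with Cons.prems(1) c have root: "f \<in> D \<longrightarrow> b" by simp
  have "reducible_annotated D L (replace_at (ts ! i) p u)"
    using Cons i c by simp
  with Cons.prems(1) c have "\<forall>t\<in>set (ts[i := replace_at (ts ! i) p u]). reducible_annotated D L t"
    by (auto dest: set_update_subset_insert[THEN subsetD])
  with root c show ?case by simp
qed simp

lemma reducible_annotated_embed_NF: "NF L t \<Longrightarrow> reducible_annotated D L (embed t)"
proof (induction t)
  case (Fun f ts)
  have "map (flat \<circ> embed) ts = ts" by (simp add: map_idI)
  with Fun NF_Fun_arg[OF Fun.prems] show ?case by simp
qed simp

lemma reducible_annotated_embed_no_defined:
  "funs_trm t \<inter> D = {} \<Longrightarrow> reducible_annotated D L (embed t)"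
  by (induction t) auto

lemma reducible_annotated_subst_sharp_D:
  "(\<And>x. x \<in> vars_trm r \<Longrightarrow> reducible_annotated D L (\<tau> x)) \<Longrightarrow>
    reducible_annotated D L (subst \<tau> (sharp_D D r))"
  by (induction r) auto

lemma reducible_annotated_sharp_root_basic:
  "basic \<Sigma> R t \<Longrightarrow> reducible_annotated (defined_syms R) L (sharp_root t)"
  unfolding basic_def by (force intro: reducible_annotated_embed_no_defined)

lemma redex_annotated:
  assumes "reducible_annotated (defined_syms R) (fst ` R) c" and "(l, mu) \<in> R" and "\<forall>x. l \<noteq> Var x"
    and "is_pos c \<pi>" and "flat (subt_at c \<pi>) = subst \<sigma> l"
  shows "annotated_at c \<pi>"
proof -
  obtain g ls where l: "l = Fun g ls" using assms(3) by (cases l) auto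
  with assms(5) obtain b ts where c\<pi>: "subt_at c \<pi> = Fun (g, b) ts"
    by (cases "subt_at c \<pi>") auto
  have "g \<in> defined_syms R" using assms(2) l unfolding defined_syms_def by blast
  moreover have "\<not> NF (fst ` R) (flat (subt_at c \<pi>))"
    using assms(2,5) not_NF_instance by (metis fst_conv image_eqI)
  moreover have "reducible_annotated (defined_syms R) (fst ` R) (subt_at c \<pi>)"
    using assms(1,4) by (rule reducible_annotated_subt_at)
  ultimately show ?thesis unfolding annotated_at_def using c\<pi> by auto
qed

lemma reducible_annotated_rewrite:
  assumes "reducible_annotated D L c" and "is_pos c \<pi>" and "flat (subt_at c \<pi>) = subst \<sigma> l"
    and "l \<in> L" and "args_NF L (subst \<sigma> l)" and "\<forall>x. l \<noteq> Var x" and "vars_trm r \<subseteq> vars_trm l"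
  shows "reducible_annotated D L (replace_at c \<pi> (subst (embed \<circ> \<sigma>) (sharp_D D r)))"
proof (rule reducible_annotated_replace_at)
  show "\<not> NF L (flat (subt_at c \<pi>))" using assms(3,4) not_NF_instance by metis
  show "reducible_annotated D L (subst (embed \<circ> \<sigma>) (sharp_D D r))"
  proof (rule reducible_annotated_subst_sharp_D)
    fix x assume "x \<in> vars_trm r"
    with assms(5-7) have "NF L (\<sigma> x)" by (blast intro: NF_subst_var)
    then show "reducible_annotated D L ((embed \<circ> \<sigma>) x)" by (simp add: reducible_annotated_embed_NF)
  qed
qed (use assms(1,2) in auto)

lemma flat_replace_at_subst_sharp_D:
  "is_pos c \<pi> \<Longrightarrow>
    flat (replace_at c \<pi> (subst (embed \<circ> \<sigma>) (sharp_D D r))) = replace_at (flat c) \<pi> (subst \<sigma> r)"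
  by (simp add: replace_at_flat flat_subst comp_def)

section \<open>Simulating rewrite sequence trees by chain trees\<close>

lemma PTRS_lhs_not_Var: "PTRS \<Sigma> R \<Longrightarrow> (l, mu) \<in> R \<Longrightarrow> \<forall>x. l \<noteq> Var x"
  unfolding PTRS_def by fast

lemma PTRS_rhs_vars:
  "PTRS \<Sigma> R \<Longrightarrow> (l, mu) \<in> R \<Longrightarrow> (p, r) \<in> set mu \<Longrightarrow> vars_trm r \<subseteq> vars_trm l"
  unfolding PTRS_def by fastforce

lemma adp_lhss_A_of: "adp_lhss (A_of R) = fst ` R"
  unfolding adp_lhss_def A_of_def by force

lemma is_tree_child:
  assumes "is_tree N" and "v @ [i] \<in> N"
  shows "inner N v" and "i < nchildren N v"
proof -
  from assms have v: "v \<in> N" unfolding is_tree_def by blast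
  with assms(1) obtain k where k: "{i. v @ [i] \<in> N} = {..<k}" unfolding is_tree_def by blast
  have "i \<in> {i. v @ [i] \<in> N}" using assms(2) by simp
  then have "i < k" unfolding k by simp
  then show "i < nchildren N v" unfolding nchildren_def k by simp
  from \<open>i < k\<close> have "0 \<in> {i. v @ [i] \<in> N}" unfolding k by simp
  with v show "inner N v" unfolding inner_def by simp
qed

lemma children_dist_length [simp]: "length (children_dist N pr tm v) = nchildren N v"
  by (simp add: children_dist_def)

lemma children_dist_nth:
  "i < nchildren N v \<Longrightarrow> children_dist N pr tm v ! i = (pr (v @ [i]) / pr v, tm (v @ [i]))"
  by (simp add: children_dist_def)

locale rst_simulation =
  fixes \<Sigma> :: "('f \<times> nat) set" and R :: "('f,'v) prule set" and N :: "nat list set"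
    and pr :: "nat list \<Rightarrow> real" and tm :: "nat list \<Rightarrow> ('f,'v) trm" and t :: "('f,'v) trm"
  assumes PTRS: "PTRS \<Sigma> R" and RST: "RST R N pr tm t" and basic: "basic \<Sigma> R t"
begin

definition is_step_witness ::
    "nat list \<Rightarrow> nat list \<times> ('f,'v) prule \<times> ('v \<Rightarrow> ('f,'v) trm) \<Rightarrow> bool" where
  "is_step_witness v = (\<lambda>(\<pi>, (l, mu), \<sigma>).
     (l, mu) \<in> R \<and> is_pos (tm v) \<pi> \<and> subt_at (tm v) \<pi> = subst \<sigma> l \<and> args_NF (fst ` R) (subst \<sigma> l) \<and>
     children_dist N pr tm v = map (\<lambda>(p, r). (p, replace_at (tm v) \<pi> (subst \<sigma> r))) mu)"

definition step_witness :: "nat list \<Rightarrow> nat list \<times> ('f,'v) prule \<times> ('v \<Rightarrow> ('f,'v) trm)" where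
  "step_witness v = (SOME w. is_step_witness v w)"

lemma step_witness:
  assumes "inner N v" and "step_witness v = (\<pi>, (l, mu), \<sigma>)"
  shows "(l, mu) \<in> R" and "is_pos (tm v) \<pi>" and "subt_at (tm v) \<pi> = subst \<sigma> l"
    and "args_NF (fst ` R) (subst \<sigma> l)"
    and "children_dist N pr tm v = map (\<lambda>(p, r). (p, replace_at (tm v) \<pi> (subst \<sigma> r))) mu"
proof -
  from RST assms(1) obtain \<pi>' l' mu' \<sigma>' where "is_step_witness v (\<pi>', (l', mu'), \<sigma>')"
    unfolding RST_def istep_def is_step_witness_def by fastforce
  then have "is_step_witness v (step_witness v)" unfolding step_witness_def by (rule someI)
  with assms(2) show "(l, mu) \<in> R" "is_pos (tm v) \<pi>" "subt_at (tm v) \<pi> = subst \<sigma> l"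
    "args_NF (fst ` R) (subst \<sigma> l)"
    "children_dist N pr tm v = map (\<lambda>(p, r). (p, replace_at (tm v) \<pi> (subst \<sigma> r))) mu"
    unfolding is_step_witness_def by simp_all
qed

lemma step_witness_child:
  assumes "inner N v" and "step_witness v = (\<pi>, (l, mu), \<sigma>)" and "i < nchildren N v"
  shows "i < length mu"
    and "pr (v @ [i]) / pr v = fst (mu ! i)"
    and "tm (v @ [i]) = replace_at (tm v) \<pi> (subst \<sigma> (snd (mu ! i)))"
proof -
  note dist = step_witness(5)[OF assms(1,2)]
  then have i: "i < length mu" using assms(3) by (metis children_dist_length length_map)
  then show "i < length mu" .
  from dist i have "children_dist N pr tm v ! i =
      (fst (mu ! i), replace_at (tm v) \<pi> (subst \<sigma> (snd (mu ! i))))"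
    by (simp add: case_prod_beta)
  then have "(pr (v @ [i]) / pr v, tm (v @ [i])) =
      (fst (mu ! i), replace_at (tm v) \<pi> (subst \<sigma> (snd (mu ! i))))"
    by (simp add: children_dist_nth[OF assms(3)])
  then show "pr (v @ [i]) / pr v = fst (mu ! i)"
    and "tm (v @ [i]) = replace_at (tm v) \<pi> (subst \<sigma> (snd (mu ! i)))"
    by simp_all
qed

primrec lifted_rev :: "nat list \<Rightarrow> ('f,'v) atrm" where
  "lifted_rev [] = sharp_root t"
| "lifted_rev (i # rv) = (case step_witness (rev rv) of (\<pi>, (l, mu), \<sigma>) \<Rightarrow>
     replace_at (lifted_rev rv) \<pi> (subst (embed \<circ> \<sigma>) (sharp_D (defined_syms R) (snd (mu ! i)))))"

definition lifted :: "nat list \<Rightarrow> ('f,'v) atrm" where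
  "lifted v = lifted_rev (rev v)"

definition lifted_info :: "nat list \<Rightarrow> nat list \<times> ('f,'v) adp \<times> ('v \<Rightarrow> ('f,'v) trm)" where
  "lifted_info v = (case step_witness v of (\<pi>, (l, mu), \<sigma>) \<Rightarrow>
     (\<pi>, (l, map (\<lambda>(p, r). (p, sharp_D (defined_syms R) r)) mu, True), \<sigma>))"

lemma lifted_Nil: "lifted [] = sharp_root t"
  by (simp add: lifted_def)

lemma lifted_snoc:
  "step_witness v = (\<pi>, (l, mu), \<sigma>) \<Longrightarrow>
    lifted (v @ [i]) = replace_at (lifted v) \<pi> (subst (embed \<circ> \<sigma>) (sharp_D (defined_syms R) (snd (mu ! i))))"
  by (simp add: lifted_def)

lemma tree: "is_tree N"
  using RST by (simp add: RST_def)

lemma lifted_flat: "v \<in> N \<Longrightarrow> flat (lifted v) = tm v"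
proof (induction v rule: rev_induct)
  case Nil
  from RST show ?case by (simp add: RST_def lifted_Nil)
next
  case (snoc i v)
  from is_tree_child[OF tree snoc.prems] have v: "inner N v" "i < nchildren N v" .
  then have IH: "flat (lifted v) = tm v" using snoc.IH by (simp add: inner_def)
  obtain \<pi> l mu \<sigma> where step: "step_witness v = (\<pi>, (l, mu), \<sigma>)" by (metis prod.exhaust)
  have "is_pos (lifted v) \<pi>" using step_witness(2)[OF v(1) step] IH by (metis is_pos_flat)
  then show ?case
    using IH lifted_snoc[OF step] step_witness_child(3)[OF v(1) step v(2)]
    by (simp add: flat_replace_at_subst_sharp_D)
qed

lemma lifted_redex:
  assumes "inner N v" and "step_witness v = (\<pi>, (l, mu), \<sigma>)"
  shows "is_pos (lifted v) \<pi>" and "flat (subt_at (lifted v) \<pi>) = subst \<sigma> l"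
proof -
  have "flat (lifted v) = tm v" using assms(1) by (simp add: inner_def lifted_flat)
  with step_witness(2,3)[OF assms] show "is_pos (lifted v) \<pi>" "flat (subt_at (lifted v) \<pi>) = subst \<sigma> l"
    by (metis is_pos_flat subt_at_flat)+
qed

lemma lifted_reducible_annotated:
  "v \<in> N \<Longrightarrow> reducible_annotated (defined_syms R) (fst ` R) (lifted v)"
proof (induction v rule: rev_induct)
  case Nil
  from basic show ?case by (simp add: lifted_Nil reducible_annotated_sharp_root_basic)
next
  case (snoc i v)
  from is_tree_child[OF tree snoc.prems] have v: "inner N v" "i < nchildren N v" .
  then have IH: "reducible_annotated (defined_syms R) (fst ` R) (lifted v)"
    using snoc.IH by (simp add: inner_def)
  obtain \<pi> l mu \<sigma> where step: "step_witness v = (\<pi>, (l, mu), \<sigma>)" by (metis prod.exhaust)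
  have rule: "(l, mu) \<in> R" using step_witness(1)[OF v(1) step] .
  show ?case
    unfolding lifted_snoc[OF step]
  proof (rule reducible_annotated_rewrite[OF IH lifted_redex[OF v(1) step]])
    show "l \<in> fst ` R" using rule by force
    show "args_NF (fst ` R) (subst \<sigma> l)" using step_witness(4)[OF v(1) step] .
    show "\<forall>x. l \<noteq> Var x" using PTRS_lhs_not_Var[OF PTRS rule] .
    show "vars_trm (snd (mu ! i)) \<subseteq> vars_trm l"
      using PTRS_rhs_vars[OF PTRS rule, of "fst (mu ! i)"] step_witness_child(1)[OF v(1) step v(2)]
      by simp
  qed
qed

lemma lifted_info_annotated_A_of:
  assumes "inner N v"
  shows "fst (snd (lifted_info v)) \<in> A_of R" and "annotated_at (lifted v) (fst (lifted_info v))"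
proof -
  obtain \<pi> l mu \<sigma> where step: "step_witness v = (\<pi>, (l, mu), \<sigma>)" by (metis prod.exhaust)
  have rule: "(l, mu) \<in> R" using step_witness(1)[OF assms step] .
  then show "fst (snd (lifted_info v)) \<in> A_of R"
    unfolding lifted_info_def step A_of_def by simp blast
  have "reducible_annotated (defined_syms R) (fst ` R) (lifted v)"
    using assms by (simp add: inner_def lifted_reducible_annotated)
  then have "annotated_at (lifted v) \<pi>"
    using rule PTRS_lhs_not_Var[OF PTRS rule] lifted_redex[OF assms step] by (rule redex_annotated)
  then show "annotated_at (lifted v) (fst (lifted_info v))"
    by (simp add: lifted_info_def step)
qed

lemma lifted_adp_step:
  assumes "inner N v"
  shows "adp_step R (A_of R) (lifted v) (lifted_info v) (children_dist N pr lifted v)"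
proof -
  obtain \<pi> l mu \<sigma> where step: "step_witness v = (\<pi>, (l, mu), \<sigma>)" by (metis prod.exhaust)
  define mu' where "mu' = map (\<lambda>(p, r). (p, sharp_D (defined_syms R) r)) mu"
  have info: "lifted_info v = (\<pi>, (l, mu', True), \<sigma>)" by (simp add: lifted_info_def step mu'_def)
  have A: "(l, mu', True) \<in> A_of R" and ann: "annotated_at (lifted v) \<pi>"
    using lifted_info_annotated_A_of[OF assms] info by simp_all
  have n: "length mu = nchildren N v"
    using step_witness(5)[OF assms step] by (metis children_dist_length length_map)
  have dist: "children_dist N pr lifted v =
      map (\<lambda>(p, r). (p, replace_at (lifted v) \<pi> (subst (embed \<circ> \<sigma>) r))) mu'"
  proof (rule nth_equalityI)
    show "length (children_dist N pr lifted v) =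
        length (map (\<lambda>(p, r). (p, replace_at (lifted v) \<pi> (subst (embed \<circ> \<sigma>) r))) mu')"
      using n by (simp add: mu'_def)
    fix i assume "i < length (children_dist N pr lifted v)"
    then have i: "i < nchildren N v" by simp
    with n step_witness_child(2)[OF assms step i] lifted_snoc[OF step]
    show "children_dist N pr lifted v ! i =
        map (\<lambda>(p, r). (p, replace_at (lifted v) \<pi> (subst (embed \<circ> \<sigma>) r))) mu' ! i"
      by (cases "mu ! i") (simp add: children_dist_nth mu'_def)
  qed
  from ann obtain f ts where "subt_at (lifted v) \<pi> = Fun (f, True) ts"
    unfolding annotated_at_def by blast
  with A ann dist lifted_redex[OF assms step] step_witness(4)[OF assms step] show ?thesis
    unfolding info adp_step_def by (simp add: adp_lhss_A_of Let_def) blast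
qed

lemma chain_tree_lifted: "chain_tree R (A_of R) N pr lifted lifted_info (sharp_root t)"
  using RST unfolding chain_tree_def RST_def by (simp add: lifted_Nil lifted_adp_step)

lemma edl_PS_lifted: "edl_PS (A_of R) N pr lifted lifted_info = edl N pr"
proof -
  have "{v. inner N v \<and> fst (snd (lifted_info v)) \<in> A_of R \<and> annotated_at (lifted v) (fst (lifted_info v))}
      = {v. inner N v}"
    using lifted_info_annotated_A_of by blast
  then show ?thesis unfolding edl_PS_def edl_def by simp
qed

end

lemma edh_le_edh_PS_A_of:
  assumes "PTRS \<Sigma> R" and "basic \<Sigma> R t"
  shows "edh R t \<le> edh_PS R (A_of R) (A_of R) t"
  unfolding edh_def
proof (rule SUP_least, clarify)
  fix N pr tm
  assume "RST R N pr tm t"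
  with assms interpret rst_simulation \<Sigma> R N pr tm t by unfold_locales
  have "edl N pr = edl_PS (A_of R) N pr lifted lifted_info" by (simp add: edl_PS_lifted)
  also have "\<dots> \<le> edh_PS R (A_of R) (A_of R) t"
    unfolding edh_PS_def using chain_tree_lifted by (force intro: SUP_upper2)
  finally show "edl N pr \<le> edh_PS R (A_of R) (A_of R) t" .
qed

lemma Pol_0_le [simp]: "Pol 0 \<le> c"
  by (cases c) (simp_all add: less_eq_complexity_def)

lemma bigO_mono: "(\<And>n. f n \<le> g n) \<Longrightarrow> bigO g h \<Longrightarrow> bigO f h"
  unfolding bigO_def by (meson order_trans)

lemma iota_mono:
  assumes "\<And>n. f n \<le> g n"
  shows "iota f \<le> iota g"
proof -
  have O: "bigO g h \<Longrightarrow> bigO f h" for h using assms by (rule bigO_mono)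
  have no_top: "\<forall>n. f n \<noteq> top" if "\<forall>n. g n \<noteq> top"
    using assms that by (metis top.not_eq_extremum order_le_less_trans)
  show ?thesis
  proof (cases "\<exists>a. bigO g (\<lambda>n. real n ^ a)")
    case True
    then have "bigO f (\<lambda>n. real n ^ (LEAST a. bigO g (\<lambda>n. real n ^ a)))" by (meson LeastI_ex O)
    then have "(LEAST a. bigO f (\<lambda>n. real n ^ a)) \<le> (LEAST a. bigO g (\<lambda>n. real n ^ a))"
      by (rule Least_le)
    with True O show ?thesis by (auto simp: iota_def less_eq_complexity_def)
  next
    case False
    then show ?thesis by (auto simp: iota_def less_eq_complexity_def dest: O no_top)
  qed
qed

lemma iota_R_le_iota_PS_A_of:
  assumes "PTRS \<Sigma> R"
  shows "iota_R \<Sigma> R \<le> iota_PS \<Sigma> R (A_of R, A_of R)"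
proof -
  have "eirc \<Sigma> R n \<le> (SUP t \<in> {t. basic \<Sigma> R t \<and> tsize t \<le> n}. edh_PS R (A_of R) (A_of R) t)" for n
    unfolding eirc_def using edh_le_edh_PS_A_of[OF assms] by (intro SUP_mono) blast
  then show ?thesis unfolding iota_R_def iota_PS_def by (simp add: iota_mono)
qed

lemma iota_zero: "iota (\<lambda>n. 0) = Pol 0"
proof -
  have O: "bigO (\<lambda>n. 0) (\<lambda>n. real n ^ 0)" unfolding bigO_def by auto
  then have "(LEAST a. bigO (\<lambda>n. 0) (\<lambda>n. real n ^ a)) = 0" by (rule Least_eq_0)
  moreover from O have "\<exists>a. bigO (\<lambda>n. 0) (\<lambda>n. real n ^ a)" ..
  ultimately show ?thesis unfolding iota_def by simp
qed

lemma SUP_zero_ennreal: "(SUP x \<in> A. 0 :: ennreal) = 0"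
  by (cases "A = {}") (simp_all add: bot_ennreal)

lemma iota_PS_empty: "iota_PS \<Sigma> R (P, {}) = Pol 0"
proof -
  have "edh_PS R P {} t = 0" for t
    by (simp add: edh_PS_def edl_PS_def psum_def SUP_zero_ennreal)
  then show ?thesis by (simp add: iota_PS_def iota_zero SUP_zero_ennreal)
qed

lemma well_formed_root_le_Max:
  assumes "proof_tree V LA LC" and "well_formed \<Sigma> R V LA LC" and "ptree_solved V LA"
  shows "iota_PS \<Sigma> R (LA []) \<le> Max (LC ` V)"
proof -
  from assms(1) have V: "finite V" "[] \<in> V" unfolding proof_tree_def by auto
  define L' where "L' w = (if ptree_inner V w then LC w else iota_PS \<Sigma> R (LA w))" for w
  have no_ancestors: "{u. \<exists>x. x \<noteq> [] \<and> [] = u @ x} = {}" by auto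
  have all_descendants: "{w \<in> V. \<exists>x. w = [] @ x} = V" by auto
  from assms(2) V(2) have "iota_PS \<Sigma> R (LA []) \<le> max (cmax (LC ` {})) (cmax (L' ` V))"
    unfolding well_formed_def Let_def no_ancestors all_descendants L'_def by fastforce
  also have "\<dots> = cmax (L' ` V)" by (simp add: cmax_def)
  also have "\<dots> \<le> Max (LC ` V)"
  proof -
    have "L' w \<le> Max (LC ` V)" if "w \<in> V" for w
    proof (cases "ptree_inner V w")
      case True
      with V that show ?thesis by (simp add: L'_def)
    next
      case False
      with assms(3) that have "snd (LA w) = {}" unfolding ptree_solved_def by blast
      then have "iota_PS \<Sigma> R (LA w) = Pol 0" by (metis iota_PS_empty prod.collapse)
      with False show ?thesis by (simp add: L'_def)
    qed
    with V show ?thesis by (simp add: cmax_def)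
  qed
  finally show ?thesis .
qed

theorem mainTheorem4:
  fixes \<Sigma> :: "('f \<times> nat) set" and R :: "('f, 'v) prule set"
    and V :: "nat list set" and LA :: "nat list \<Rightarrow> ('f, 'v) adp_problem"
    and LC :: "nat list \<Rightarrow> complexity"
  assumes "infinite (UNIV :: 'v set)"
    and "PTRS \<Sigma> R"
    and "proof_tree V LA LC"
    and "well_formed \<Sigma> R V LA LC"
    and "ptree_solved V LA"
    and "LA [] = (A_of R, A_of R)"
  shows "iota_R \<Sigma> R \<le> Max (LC ` V)"
proof -
  \<comment> \<open>The simulation reuses the substitutions of the rewrite steps.\<close>
  have "iota_R \<Sigma> R \<le> iota_PS \<Sigma> R (A_of R, A_of R)"
    using assms(2) by (rule iota_R_le_iota_PS_A_of)
  also have "\<dots> \<le> Max (LC ` V)"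
    using well_formed_root_le_Max[OF assms(3-5)] assms(6) by simp
  finally show ?thesis .
qed

end
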